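(* Consider the uncoded caching problem: maximize $G(X)=\sum_{u=1}^U(\omega_{0,u}-\bar D_u)$ over sets $X\subseteq S=\{s_f^h: 1\le f\le F,\ 1\le h\le H\}$ satisfying $|X\cap S_h|\le M$ for all $h=1,\dots,H$, where $S_h=\{s_1^h,\dots,s_F^h\}$ and $X$ corresponds to the placement matrix $x_{f,h}=\mathbf{1}[s_f^h\in X]$, and $$\bar D_u=\sum_{j=1}^{|\mathcal{H}(u)|-1}\omega_{(j)_u,u}\sum_{f=1}^F\Big[\prod_{i=1}^{j-1}(1-x_{f,(i)_u})\Big]x_{f,(j)_u}P_f+\omega_{0,u}\sum_{f=1}^F\Big[\prod_{i=1}^{|\mathcal{H}(u)|-1}(1-x_{f,(i)_u})\Big]P_f.$$ The greedy algorithm, which starts from $X=\emptyset$ and repeatedly adds to $X$ an element $s\in S\setminus X$ with the largest marginal value $G(X\cup\{s\})-G(X)$ among those with $X\cup\{s\}$ still feasible, stopping when no feasible element can be added or the largest marginal value is zero, outputs a feasible $X_{\rm greedy}$ with $G(X_{\rm greedy})\ge \tfrac12\max\{G(X): X \text{ feasible}\}$.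
   Context: Setting: helpers $\{0,1,\dots,H\}$, where helper $0$ is the base station; users $\{1,\dots,U\}$; files $\{1,\dots,F\}$ with request probabilities $P_f\ge0$ summing to $1$; each helper $h\ge1$ has cache capacity $M$ files. A bipartite graph with edge set $\mathcal{E}$ between helpers and users, with $(0,u)\in\mathcal{E}$ for all $u$; $\mathcal{H}(u)=\{h:(h,u)\in\mathcal{E}\}$. Nonnegative reals $\omega_{h,u}$ (per-bit download delays) satisfy $\omega_{0,u}\ge\omega_{h,u}$ for $(h,u)\in\mathcal{E}$, and $\omega_{h,u}=\omega_\infty$ (a constant much larger than $\max_u\omega_{0,u}$) for $(h,u)\notin\mathcal{E}$. $(j)_u$ denotes the helper of $\mathcal{H}(u)$ with the $j$-th smallest delay to $u$, ordered so that $(|\mathcal{H}(u)|)_u=0$. Empty products equal $1$ and empty sums equal $0$. *)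

theory Defs
  imports Main "HOL-Library.FuncSet" Complex_Main
begin

text \<open>Elements s_f^h of the ground set are encoded as pairs (f,h).
  Helpers are naturals 0..H (0 = base station), users 1..U, files 1..F.
  The ordering (j)_u is given by a function ord with ord u j = (j)_u.\<close>

definition Hs :: "(nat \<times> nat) set \<Rightarrow> nat \<Rightarrow> nat set" where
  "Hs E u = {h. (h, u) \<in> E}"

definition Sset :: "nat \<Rightarrow> nat \<Rightarrow> (nat \<times> nat) set" where
  "Sset F H = {1..F} \<times> {1..H}"

definition Sh :: "nat \<Rightarrow> nat \<Rightarrow> (nat \<times> nat) set" where
  "Sh F h = {1..F} \<times> {h}"

definition feasible :: "nat \<Rightarrow> nat \<Rightarrow> nat \<Rightarrow> (nat \<times> nat) set \<Rightarrow> bool" where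
  "feasible F H M X \<longleftrightarrow> X \<subseteq> Sset F H \<and> (\<forall>h\<in>{1..H}. card (X \<inter> Sh F h) \<le> M)"

definition xval :: "(nat \<times> nat) set \<Rightarrow> nat \<Rightarrow> nat \<Rightarrow> real" where
  "xval X f h = (if (f, h) \<in> X then 1 else 0)"

definition Dbar :: "(nat \<times> nat) set \<Rightarrow> nat \<Rightarrow> (nat \<Rightarrow> real) \<Rightarrow> (nat \<Rightarrow> nat \<Rightarrow> real)
    \<Rightarrow> (nat \<Rightarrow> nat \<Rightarrow> nat) \<Rightarrow> (nat \<times> nat) set \<Rightarrow> nat \<Rightarrow> real" where
  "Dbar E F P \<omega> ord X u =
     (\<Sum>j=1..card (Hs E u) - 1. \<omega> (ord u j) u *
        (\<Sum>f=1..F. (\<Prod>i=1..j-1. 1 - xval X f (ord u i)) * xval X f (ord u j) * P f))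
   + \<omega> 0 u * (\<Sum>f=1..F. (\<Prod>i=1..card (Hs E u) - 1. 1 - xval X f (ord u i)) * P f)"

definition Gval :: "nat \<Rightarrow> (nat \<times> nat) set \<Rightarrow> nat \<Rightarrow> (nat \<Rightarrow> real) \<Rightarrow> (nat \<Rightarrow> nat \<Rightarrow> real)
    \<Rightarrow> (nat \<Rightarrow> nat \<Rightarrow> nat) \<Rightarrow> (nat \<times> nat) set \<Rightarrow> real" where
  "Gval U E F P \<omega> ord X = (\<Sum>u=1..U. \<omega> 0 u - Dbar E F P \<omega> ord X u)"

definition cand :: "'a set \<Rightarrow> ('a set \<Rightarrow> bool) \<Rightarrow> 'a set \<Rightarrow> 'a set" where
  "cand S feas X = {s \<in> S - X. feas (insert s X)}"

definition gain :: "('a set \<Rightarrow> real) \<Rightarrow> 'a set \<Rightarrow> 'a \<Rightarrow> real" where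
  "gain G X s = G (insert s X) - G X"

definition maxgain :: "'a set \<Rightarrow> ('a set \<Rightarrow> bool) \<Rightarrow> ('a set \<Rightarrow> real) \<Rightarrow> 'a set \<Rightarrow> real" where
  "maxgain S feas G X = Max (gain G X ` cand S feas X)"

definition greedy_stop :: "'a set \<Rightarrow> ('a set \<Rightarrow> bool) \<Rightarrow> ('a set \<Rightarrow> real) \<Rightarrow> 'a set \<Rightarrow> bool" where
  "greedy_stop S feas G X \<longleftrightarrow> cand S feas X = {} \<or> maxgain S feas G X = 0"

text \<open>States reachable by some run of the greedy algorithm (any tie-breaking).\<close>
inductive greedy_reach :: "'a set \<Rightarrow> ('a set \<Rightarrow> bool) \<Rightarrow> ('a set \<Rightarrow> real) \<Rightarrow> 'a set \<Rightarrow> bool"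
  for S feas G where
  start: "greedy_reach S feas G {}"
| step: "greedy_reach S feas G X \<Longrightarrow> \<not> greedy_stop S feas G X \<Longrightarrow> s \<in> cand S feas X
         \<Longrightarrow> gain G X s = maxgain S feas G X \<Longrightarrow> greedy_reach S feas G (insert s X)"

definition greedy_output :: "'a set \<Rightarrow> ('a set \<Rightarrow> bool) \<Rightarrow> ('a set \<Rightarrow> real) \<Rightarrow> 'a set \<Rightarrow> bool" where
  "greedy_output S feas G X \<longleftrightarrow> greedy_reach S feas G X \<and> greedy_stop S feas G X"

end

theory Submission
  imports Defs
begin

text \<open>A user fetches a file from the fastest helper holding it, so for each user u and file f the
  delay reduction w.r.t. the base station is the largest saving \<omega> 0 u - \<omega> h u over the cached
  copies (f, h), or 0 if there is none. Hence G is a nonnegative combination of maxima of weights: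
  monotone, submodular, and G {} = 0. The constraints form a partition matroid with one block of
  capacity M per helper. Charging each element of an optimal placement Y outside the greedy output X
  to a distinct greedy step in its block, whose gain was at least as large, gives
  G Y \<le> G X + (G X - G {}); the elements of Y that could still be added have nonpositive gain when
  the greedy algorithm stops.\<close>

definition max_weight :: "('a \<Rightarrow> real) \<Rightarrow> 'a set \<Rightarrow> real" where
  "max_weight a X = Max (insert 0 (a ` X))"

lemma max_weight_empty [simp]: "max_weight a {} = 0"
  unfolding max_weight_def by simp

lemma max_weight_insert:
  "finite X \<Longrightarrow> max_weight a (insert e X) = max (a e) (max_weight a X)"
proof -
  assume "finite X"
  have "insert 0 (a ` insert e X) = insert (a e) (insert 0 (a ` X))" by auto
  then show ?thesis unfolding max_weight_def using \<open>finite X\<close> by simp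
qed

lemma max_weight_mono: "finite B \<Longrightarrow> A \<subseteq> B \<Longrightarrow> max_weight a A \<le> max_weight a B"
  unfolding max_weight_def by (rule Max_mono) auto

lemma max_weight_diminishing_returns:
  assumes "finite B" "A \<subseteq> B"
  shows "max_weight a (insert e B) - max_weight a B \<le> max_weight a (insert e A) - max_weight a A"
proof -
  have "finite A" using assms finite_subset by blast
  then show ?thesis
    using max_weight_mono[OF assms, of a] max_weight_insert[OF assms(1), of a e] max_weight_insert[of A a e]
    by (simp add: max_def)
qed

lemma prod_one_minus_indicator:
  "finite A \<Longrightarrow> (\<Prod>i\<in>A. 1 - (if b i then 1 else 0 :: real)) = (if \<exists>i\<in>A. b i then 0 else 1)"
  by (induction A rule: finite_induct) auto

text \<open>Only the first cached helper k in the delay order contributes, and by sortedness its saving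
  w0 - w k is the largest one.\<close>

lemma cascade_delay_eq:
  fixes w :: "nat \<Rightarrow> real" and b :: "nat \<Rightarrow> bool"
  assumes sorted: "\<And>i j. 1 \<le> i \<Longrightarrow> i \<le> j \<Longrightarrow> j \<le> n \<Longrightarrow> w i \<le> w j"
    and below: "\<And>j. j \<in> {1..n} \<Longrightarrow> w j \<le> w0"
  defines "x \<equiv> \<lambda>i. if b i then 1 else 0 :: real"
  shows "(\<Sum>j=1..n. w j * ((\<Prod>i=1..j-1. 1 - x i) * x j)) + w0 * (\<Prod>i=1..n. 1 - x i)
       = w0 - Max (insert 0 ((\<lambda>j. w0 - w j) ` {j\<in>{1..n}. b j}))"
proof (cases "\<exists>j\<in>{1..n}. b j")
  case False
  then have no_hit: "{j\<in>{1..n}. b j} = {}" by auto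
  show ?thesis using False unfolding x_def no_hit
    by (simp add: prod_one_minus_indicator)
next
  case True
  define k where "k = (LEAST j. j \<in> {1..n} \<and> b j)"
  have k: "k \<in> {1..n}" "b k"
    using LeastI_ex[of "\<lambda>j. j \<in> {1..n} \<and> b j"] True unfolding k_def by blast+
  have k_least: "k \<le> j" if "j \<in> {1..n}" "b j" for j
    unfolding k_def using that by (intro Least_le) blast
  have first_hit: "(\<Prod>i=1..j-1. 1 - x i) * x j = (if j = k then 1 else 0)" if "j \<in> {1..n}" for j
  proof -
    consider "j < k" | "j = k" | "k < j" by linarith
    then show ?thesis
    proof cases
      case 1
      then show ?thesis using k_least[of j] that unfolding x_def by auto
    next
      case 2
      have "\<not> (\<exists>i\<in>{1..j-1}. b i)" using k_least k 2 by fastforce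
      then show ?thesis using 2 k unfolding x_def by (simp add: prod_one_minus_indicator)
    next
      case 3
      then have "\<exists>i\<in>{1..j-1}. b i" using k by auto
      then show ?thesis using 3 unfolding x_def by (simp add: prod_one_minus_indicator)
    qed
  qed
  have "(\<Sum>j=1..n. w j * ((\<Prod>i=1..j-1. 1 - x i) * x j)) = (\<Sum>j=1..n. if j = k then w j else 0)"
    by (rule sum.cong[OF refl]) (metis first_hit mult_cancel_left1 mult_zero_right)
  also have "\<dots> = w k"
    using k(1) by (simp add: sum.delta)
  finally have "(\<Sum>j=1..n. w j * ((\<Prod>i=1..j-1. 1 - x i) * x j)) = w k" .
  moreover have "(\<Prod>i=1..n. 1 - x i) = 0"
    using True unfolding x_def by (simp add: prod_one_minus_indicator)
  moreover have "Max (insert 0 ((\<lambda>j. w0 - w j) ` {j\<in>{1..n}. b j})) = w0 - w k"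
  proof (rule Max_eqI)
    show "y \<le> w0 - w k" if "y \<in> insert 0 ((\<lambda>j. w0 - w j) ` {j\<in>{1..n}. b j})" for y
      using that below[OF k(1)] sorted k_least k(1) by fastforce
    show "w0 - w k \<in> insert 0 ((\<lambda>j. w0 - w j) ` {j\<in>{1..n}. b j})"
      using k by blast
  qed simp
  ultimately show ?thesis by simp
qed

definition saving :: "(nat \<times> nat) set \<Rightarrow> (nat \<Rightarrow> nat \<Rightarrow> real) \<Rightarrow> nat \<Rightarrow> nat \<Rightarrow> nat \<times> nat \<Rightarrow> real" where
  "saving E \<omega> u f = (\<lambda>(f', h). if f' = f \<and> h \<in> Hs E u - {0} then \<omega> 0 u - \<omega> h u else 0)"

lemma insert_0_image_saving:
  "insert 0 (saving E \<omega> u f ` X)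
     = insert 0 ((\<lambda>h. \<omega> 0 u - \<omega> h u) ` {h \<in> Hs E u - {0}. (f, h) \<in> X})"
proof -
  have "saving E \<omega> u f p \<in> insert 0 ((\<lambda>h. \<omega> 0 u - \<omega> h u) ` {h \<in> Hs E u - {0}. (f, h) \<in> X})"
    if "p \<in> X" for p
    using that unfolding saving_def by (cases p) auto
  moreover have "(\<lambda>h. \<omega> 0 u - \<omega> h u) ` {h \<in> Hs E u - {0}. (f, h) \<in> X} \<subseteq> saving E \<omega> u f ` X"
  proof
    fix y assume "y \<in> (\<lambda>h. \<omega> 0 u - \<omega> h u) ` {h \<in> Hs E u - {0}. (f, h) \<in> X}"
    then obtain h where "h \<in> Hs E u - {0}" "(f, h) \<in> X" "y = \<omega> 0 u - \<omega> h u" by blast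
    then show "y \<in> saving E \<omega> u f ` X" by (intro image_eqI[of _ _ "(f, h)"]) (auto simp: saving_def)
  qed
  ultimately show ?thesis by blast
qed

lemma file_delay_eq_max_saving:
  fixes \<omega> :: "nat \<Rightarrow> nat \<Rightarrow> real"
  assumes bij: "bij_betw (ord u) {1..card (Hs E u)} (Hs E u)"
    and sorted: "\<forall>i\<in>{1..card (Hs E u)}. \<forall>j\<in>{1..card (Hs E u)}.
                   i \<le> j \<longrightarrow> \<omega> (ord u i) u \<le> \<omega> (ord u j) u"
    and last: "ord u (card (Hs E u)) = 0"
    and fin: "finite (Hs E u)" and base: "0 \<in> Hs E u"
  shows "(\<Sum>j=1..card (Hs E u) - 1. \<omega> (ord u j) u *
            ((\<Prod>i=1..j-1. 1 - xval X f (ord u i)) * xval X f (ord u j)))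
        + \<omega> 0 u * (\<Prod>i=1..card (Hs E u) - 1. 1 - xval X f (ord u i))
       = \<omega> 0 u - max_weight (saving E \<omega> u f) X"
proof -
  define n where "n = card (Hs E u)"
  have "n \<ge> 1" using fin base unfolding n_def by (metis One_nat_def Suc_leI card_gt_0_iff empty_iff)
  then have "{1..n-1} = {1..n} - {n}" by auto
  moreover have "ord u ` ({1..n} - {n}) = ord u ` {1..n} - ord u ` {n}"
    using bij \<open>n \<ge> 1\<close> unfolding n_def bij_betw_def by (intro inj_on_image_set_diff) auto
  ultimately have helpers: "ord u ` {1..n-1} = Hs E u - {0}"
    using bij last unfolding n_def bij_betw_def by simp
  have sorted': "\<And>i j. 1 \<le> i \<Longrightarrow> i \<le> j \<Longrightarrow> j \<le> n - 1 \<Longrightarrow> \<omega> (ord u i) u \<le> \<omega> (ord u j) u"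
    using sorted unfolding n_def by auto
  have below: "\<omega> (ord u j) u \<le> \<omega> 0 u" if "j \<in> {1..n-1}" for j
    using sorted[rule_format, of j n] that last \<open>n \<ge> 1\<close> unfolding n_def by auto
  have "insert 0 (saving E \<omega> u f ` X)
      = insert 0 ((\<lambda>h. \<omega> 0 u - \<omega> h u) ` {h \<in> Hs E u - {0}. (f, h) \<in> X})"
    by (rule insert_0_image_saving)
  also have "\<dots> = insert 0 ((\<lambda>j. \<omega> 0 u - \<omega> (ord u j) u) ` {j\<in>{1..n-1}. (f, ord u j) \<in> X})"
    unfolding helpers[symmetric] by (auto simp: image_image)
  finally have "max_weight (saving E \<omega> u f) X
      = Max (insert 0 ((\<lambda>j. \<omega> 0 u - \<omega> (ord u j) u) ` {j\<in>{1..n-1}. (f, ord u j) \<in> X}))"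
    unfolding max_weight_def by simp
  with cascade_delay_eq[OF sorted' below, where b="\<lambda>j. (f, ord u j) \<in> X"]
  show ?thesis unfolding n_def xval_def by simp
qed

lemma Dbar_eq_sum_files:
  "Dbar E F P \<omega> ord X u = (\<Sum>f=1..F. P f *
     ((\<Sum>j=1..card (Hs E u) - 1. \<omega> (ord u j) u *
            ((\<Prod>i=1..j-1. 1 - xval X f (ord u i)) * xval X f (ord u j)))
        + \<omega> 0 u * (\<Prod>i=1..card (Hs E u) - 1. 1 - xval X f (ord u i))))"
  unfolding Dbar_def distrib_left sum.distrib sum_distrib_left
  by (subst sum.swap) (simp add: mult_ac)

lemma Gval_eq_sum_max_saving:
  fixes \<omega> :: "nat \<Rightarrow> nat \<Rightarrow> real"
  assumes P_sum: "(\<Sum>f=1..F. P f) = 1"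
    and E_sub: "E \<subseteq> {0..H} \<times> {1..U}"
    and E_base: "\<forall>u\<in>{1..U}. (0, u) \<in> E"
    and ord_bij: "\<forall>u\<in>{1..U}. bij_betw (ord u) {1..card (Hs E u)} (Hs E u)"
    and ord_sorted: "\<forall>u\<in>{1..U}. \<forall>i\<in>{1..card (Hs E u)}. \<forall>j\<in>{1..card (Hs E u)}.
                        i \<le> j \<longrightarrow> \<omega> (ord u i) u \<le> \<omega> (ord u j) u"
    and ord_last: "\<forall>u\<in>{1..U}. ord u (card (Hs E u)) = 0"
  shows "Gval U E F P \<omega> ord X = (\<Sum>u=1..U. \<Sum>f=1..F. P f * max_weight (saving E \<omega> u f) X)"
  unfolding Gval_def
proof (rule sum.cong[OF refl])
  fix u assume u: "u \<in> {1..U}"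
  have "finite (Hs E u)"
    using E_sub unfolding Hs_def by (auto intro: finite_subset[of _ "{0..H}"])
  moreover have "0 \<in> Hs E u" using E_base u unfolding Hs_def by auto
  ultimately have "Dbar E F P \<omega> ord X u = (\<Sum>f=1..F. P f * (\<omega> 0 u - max_weight (saving E \<omega> u f) X))"
    unfolding Dbar_eq_sum_files
    using file_delay_eq_max_saving ord_bij ord_sorted ord_last u by simp
  also have "\<dots> = \<omega> 0 u - (\<Sum>f=1..F. P f * max_weight (saving E \<omega> u f) X)"
    using P_sum by (simp add: right_diff_distrib sum_subtractf flip: sum_distrib_right)
  finally show "\<omega> 0 u - Dbar E F P \<omega> ord X u = (\<Sum>f=1..F. P f * max_weight (saving E \<omega> u f) X)"
    by simp
qed

definition submodular_on :: "'a set \<Rightarrow> ('a set \<Rightarrow> real) \<Rightarrow> bool" where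
  "submodular_on S G \<longleftrightarrow> (\<forall>A B e. A \<subseteq> B \<longrightarrow> B \<subseteq> S \<longrightarrow> gain G B e \<le> gain G A e)"

lemma submodular_onD: "submodular_on S G \<Longrightarrow> A \<subseteq> B \<Longrightarrow> B \<subseteq> S \<Longrightarrow> gain G B e \<le> gain G A e"
  unfolding submodular_on_def by blast

lemma mono_on_sum_max_weight:
  fixes c :: "'k \<Rightarrow> real"
  assumes "finite S" "\<forall>k\<in>K. c k \<ge> 0"
  shows "mono_on (Pow S) (\<lambda>X. \<Sum>k\<in>K. c k * max_weight (a k) X)"
proof (rule mono_onI)
  fix A B assume "A \<in> Pow S" "B \<in> Pow S" "A \<le> B"
  then have "finite B" "A \<subseteq> B" using assms(1) finite_subset by auto
  then show "(\<Sum>k\<in>K. c k * max_weight (a k) A) \<le> (\<Sum>k\<in>K. c k * max_weight (a k) B)"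
    using assms(2) max_weight_mono by (intro sum_mono mult_left_mono) auto
qed

lemma submodular_on_sum_max_weight:
  fixes c :: "'k \<Rightarrow> real"
  assumes "finite S" "\<forall>k\<in>K. c k \<ge> 0"
  shows "submodular_on S (\<lambda>X. \<Sum>k\<in>K. c k * max_weight (a k) X)"
  unfolding submodular_on_def gain_def
proof (intro allI impI)
  fix A B e assume "A \<subseteq> B" "B \<subseteq> S"
  then have "finite B" using assms(1) finite_subset by auto
  then have "(\<Sum>k\<in>K. c k * (max_weight (a k) (insert e B) - max_weight (a k) B))
      \<le> (\<Sum>k\<in>K. c k * (max_weight (a k) (insert e A) - max_weight (a k) A))"
    using assms(2) max_weight_diminishing_returns \<open>A \<subseteq> B\<close> by (intro sum_mono mult_left_mono) auto
  then show "(\<Sum>k\<in>K. c k * max_weight (a k) (insert e B)) - (\<Sum>k\<in>K. c k * max_weight (a k) B)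
      \<le> (\<Sum>k\<in>K. c k * max_weight (a k) (insert e A)) - (\<Sum>k\<in>K. c k * max_weight (a k) A)"
    by (simp add: right_diff_distrib sum_subtractf)
qed

lemma submodular_on_union_le_sum_gain:
  assumes "submodular_on S G" "A \<subseteq> S" "finite Z" "Z \<subseteq> S"
  shows "G (A \<union> Z) \<le> G A + (\<Sum>z\<in>Z. gain G A z)"
  using assms(3,4)
proof (induction Z rule: finite_induct)
  case (insert z Z)
  have "G (A \<union> insert z Z) = G (A \<union> Z) + gain G (A \<union> Z) z"
    unfolding gain_def by simp
  also have "gain G (A \<union> Z) z \<le> gain G A z"
    using assms(1,2) insert.prems by (intro submodular_onD) auto
  finally show ?case using insert by simp
qed simp

lemma finite_Sset [simp]: "finite (Sset F H)"
  unfolding Sset_def by simp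

lemma mem_Sh_iff: "s \<in> Sh F h \<longleftrightarrow> fst s \<in> {1..F} \<and> snd s = h"
  unfolding Sh_def by (cases s) auto

lemma mem_Sset_iff: "s \<in> Sset F H \<longleftrightarrow> fst s \<in> {1..F} \<and> snd s \<in> {1..H}"
  unfolding Sset_def by (cases s) auto

lemma card_insert_Int_Sh:
  assumes "finite X" "s \<notin> X"
  shows "card (insert s X \<inter> Sh F h) = card (X \<inter> Sh F h) + (if s \<in> Sh F h then 1 else 0)"
  using assms by (simp add: Int_insert_left)

lemma finite_feasible: "finite {Y. feasible F H M Y}"
proof (rule finite_subset)
  show "{Y. feasible F H M Y} \<subseteq> Pow (Sset F H)" unfolding feasible_def by auto
qed simp

lemma feasible_insert_same_block:
  assumes feas: "feasible F H M (insert s X)" and "s \<notin> X" "z \<in> Sset F H" "snd z = snd s"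
  shows "feasible F H M (insert z X)"
  unfolding feasible_def
proof (intro conjI ballI)
  have X: "X \<subseteq> Sset F H" "finite X"
    using feas unfolding feasible_def by (auto intro: rev_finite_subset[OF finite_Sset])
  then show "insert z X \<subseteq> Sset F H" using assms(3) by simp
  fix h assume h: "h \<in> {1..H}"
  have "card (insert z X \<inter> Sh F h) \<le> card (insert s X \<inter> Sh F h)"
  proof (cases "z \<in> X")
    case True
    then show ?thesis using X by (intro card_mono) auto
  next
    case False
    have "z \<in> Sh F h \<longleftrightarrow> s \<in> Sh F h"
      using assms(3,4) feas unfolding feasible_def by (auto simp: mem_Sh_iff mem_Sset_iff)
    then show ?thesis using False \<open>s \<notin> X\<close> X by (simp add: card_insert_Int_Sh)
  qed
  also have "\<dots> \<le> M" using feas h unfolding feasible_def by blast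
  finally show "card (insert z X \<inter> Sh F h) \<le> M" .
qed

definition block_dominated :: "nat \<Rightarrow> nat \<Rightarrow> (nat \<times> nat) set \<Rightarrow> (nat \<times> nat) set \<Rightarrow> bool" where
  "block_dominated F H Z X \<longleftrightarrow> (\<forall>h\<in>{1..H}. card (Z \<inter> Sh F h) \<le> card (X \<inter> Sh F h))"

lemma block_dominated_empty:
  assumes "Z \<subseteq> Sset F H" "block_dominated F H Z {}"
  shows "Z = {}"
proof (rule ccontr)
  assume "Z \<noteq> {}"
  then obtain z where "z \<in> Z" by blast
  then have "z \<in> Z \<inter> Sh F (snd z)" "snd z \<in> {1..H}"
    using assms(1) by (auto simp: mem_Sh_iff mem_Sset_iff)
  moreover have "finite Z" using assms(1) finite_subset finite_Sset by blast
  ultimately show False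
    using assms(2) unfolding block_dominated_def by (metis card_0_eq empty_iff finite_Int inf_bot_left le_zero_eq)
qed

lemma block_dominated_insert_remove:
  assumes dom: "block_dominated F H Z (insert s X)" and "s \<in> Sset F H" "s \<notin> X" "finite X" "finite Z"
    and z0: "Z \<inter> Sh F (snd s) = {} \<or> z0 \<in> Z \<inter> Sh F (snd s)"
  shows "block_dominated F H (Z - {z0}) X"
  unfolding block_dominated_def
proof
  fix h assume h: "h \<in> {1..H}"
  have s_block: "s \<in> Sh F h \<longleftrightarrow> h = snd s" using \<open>s \<in> Sset F H\<close> by (auto simp: mem_Sh_iff mem_Sset_iff)
  have "card (Z \<inter> Sh F h) \<le> card (insert s X \<inter> Sh F h)"
    using dom h unfolding block_dominated_def by blast
  then have dom_h: "card (Z \<inter> Sh F h) \<le> card (X \<inter> Sh F h) + (if h = snd s then 1 else 0)"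
    using assms(3,4) s_block by (simp add: card_insert_Int_Sh)
  show "card ((Z - {z0}) \<inter> Sh F h) \<le> card (X \<inter> Sh F h)"
  proof (cases "h = snd s \<and> z0 \<in> Z \<inter> Sh F (snd s)")
    case True
    then have "(Z - {z0}) \<inter> Sh F h = Z \<inter> Sh F h - {z0}" "z0 \<in> Z \<inter> Sh F h" by auto
    then have "card ((Z - {z0}) \<inter> Sh F h) = card (Z \<inter> Sh F h) - 1"
      using \<open>finite Z\<close> by (simp add: card_Diff_singleton)
    then show ?thesis using dom_h True by simp
  next
    case False
    then have "card ((Z - {z0}) \<inter> Sh F h) \<le> card (Z \<inter> Sh F h) - (if h = snd s then 1 else 0)"
      using z0 \<open>finite Z\<close> by (auto intro: card_mono)
    then show ?thesis using dom_h by simp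
  qed
qed

lemma greedy_reach_feasible: "greedy_reach S (feasible F H M) G X \<Longrightarrow> feasible F H M X"
  by (induction rule: greedy_reach.induct) (auto simp: feasible_def cand_def)

lemma gain_le_maxgain: "finite S \<Longrightarrow> z \<in> cand S feas X \<Longrightarrow> gain G X z \<le> maxgain S feas G X"
  unfolding maxgain_def cand_def by (intro Max_ge) auto

lemma greedy_output_exists:
  assumes "finite S"
  shows "\<exists>X. greedy_output S feas G X"
proof -
  have "\<exists>Y. greedy_output S feas G Y" if "greedy_reach S feas G X" for X
    using that
  proof (induction "card (S - X)" arbitrary: X rule: less_induct)
    case less
    show ?case
    proof (cases "greedy_stop S feas G X")
      case True
      then show ?thesis using less.prems unfolding greedy_output_def by blast
    next
      case False
      then have "cand S feas X \<noteq> {}" unfolding greedy_stop_def by blast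
      moreover have "finite (cand S feas X)" unfolding cand_def using assms by simp
      ultimately have "maxgain S feas G X \<in> gain G X ` cand S feas X"
        unfolding maxgain_def by (intro Max_in) auto
      then obtain s where s: "s \<in> cand S feas X" "gain G X s = maxgain S feas G X"
        by (metis imageE)
      then have "greedy_reach S feas G (insert s X)"
        using greedy_reach.step[OF less.prems False] by blast
      moreover have "card (S - insert s X) < card (S - X)"
        using s(1) assms unfolding cand_def by (intro psubset_card_mono) auto
      ultimately show ?thesis using less.hyps by blast
    qed
  qed
  then show ?thesis using greedy_reach.start by blast
qed

text \<open>The greedy element s pays for one element of Z in its own block, since it was chosen while that
  element was still addable; the remaining elements are paid for by the previous steps.\<close>

lemma greedy_charging_step:
  assumes sub: "submodular_on (Sset F H) G" and grow: "G X \<le> G (insert s X)"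
    and s: "s \<in> Sset F H" "s \<notin> X" and X: "X \<subseteq> Sset F H"
    and greedy: "\<And>z. z \<in> Sset F H - X \<Longrightarrow> snd z = snd s \<Longrightarrow> gain G X z \<le> gain G X s"
    and IH: "\<And>Z. Z \<subseteq> Sset F H - X \<Longrightarrow> block_dominated F H Z X \<Longrightarrow> (\<Sum>z\<in>Z. gain G X z) \<le> G X - G {}"
    and Z: "Z \<subseteq> Sset F H - insert s X" "block_dominated F H Z (insert s X)"
  shows "(\<Sum>z\<in>Z. gain G (insert s X) z) \<le> G (insert s X) - G {}"
proof -
  have fin: "finite X" "finite Z" using X Z(1) by (auto intro: rev_finite_subset[OF finite_Sset])
  have shrink: "(\<Sum>z\<in>A. gain G (insert s X) z) \<le> (\<Sum>z\<in>A. gain G X z)" for A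
    using submodular_onD[OF sub, of X "insert s X"] s X by (intro sum_mono) auto
  consider "Z \<inter> Sh F (snd s) = {}" | z0 where "z0 \<in> Z \<inter> Sh F (snd s)" by blast
  then show ?thesis
  proof cases
    case 1
    then have "block_dominated F H (Z - {s}) X"
      using block_dominated_insert_remove[OF Z(2) s fin] by blast
    moreover have "Z - {s} = Z" using Z(1) by auto
    ultimately have "(\<Sum>z\<in>Z. gain G X z) \<le> G X - G {}"
      using IH[of "Z - {s}"] Z(1) by auto
    then show ?thesis using shrink[of Z] grow by linarith
  next
    case 2
    then have "block_dominated F H (Z - {z0}) X"
      using block_dominated_insert_remove[OF Z(2) s fin] by blast
    then have IH0: "(\<Sum>z\<in>Z - {z0}. gain G X z) \<le> G X - G {}"
      by (rule IH[rotated]) (use Z(1) in auto)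
    have "gain G (insert s X) z0 \<le> gain G X z0" using shrink[of "{z0}"] by simp
    also have "\<dots> \<le> gain G X s"
      using 2 Z(1) by (intro greedy) (auto simp: mem_Sh_iff)
    finally have z0_gain: "gain G (insert s X) z0 \<le> gain G X s" .
    have "(\<Sum>z\<in>Z. gain G (insert s X) z) = gain G (insert s X) z0 + (\<Sum>z\<in>Z - {z0}. gain G (insert s X) z)"
      using 2 fin(2) by (intro sum.remove) auto
    also have "\<dots> \<le> gain G X s + (G X - G {})"
      using z0_gain shrink[of "Z - {z0}"] IH0 by linarith
    also have "\<dots> = G (insert s X) - G {}" unfolding gain_def by simp
    finally show ?thesis .
  qed
qed

lemma greedy_reach_charging:
  assumes mono: "mono_on (Pow (Sset F H)) G" and sub: "submodular_on (Sset F H) G"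
    and "greedy_reach (Sset F H) (feasible F H M) G X"
    and "Z \<subseteq> Sset F H - X" "block_dominated F H Z X"
  shows "(\<Sum>z\<in>Z. gain G X z) \<le> G X - G {}"
  using assms(3-5)
proof (induction arbitrary: Z rule: greedy_reach.induct)
  case start
  then show ?case using block_dominated_empty[of Z F H] by simp
next
  case (step X s)
  have s: "s \<in> Sset F H" "s \<notin> X" and feas: "feasible F H M (insert s X)"
    using step.hyps(3) unfolding cand_def by auto
  then have X: "X \<subseteq> Sset F H" unfolding feasible_def by blast
  have grow: "G X \<le> G (insert s X)" using s X by (intro mono_onD[OF mono]) auto
  have greedy: "gain G X z \<le> gain G X s" if "z \<in> Sset F H - X" "snd z = snd s" for z
  proof -
    have "z \<in> cand (Sset F H) (feasible F H M) X"
      using feasible_insert_same_block[OF feas s(2)] that unfolding cand_def by auto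
    then have "gain G X z \<le> maxgain (Sset F H) (feasible F H M) G X"
      by (intro gain_le_maxgain) simp_all
    then show ?thesis using step.hyps(4) by simp
  qed
  show ?case using greedy_charging_step[OF sub grow s X greedy step.IH step.prems] .
qed

lemma block_dominated_unaddable:
  assumes X: "feasible F H M X" and Y: "feasible F H M Y"
  shows "block_dominated F H {q \<in> Y - X. \<not> feasible F H M (insert q X)} X"
  unfolding block_dominated_def
proof
  fix h assume h: "h \<in> {1..H}"
  let ?Z = "{q \<in> Y - X. \<not> feasible F H M (insert q X)}"
  show "card (?Z \<inter> Sh F h) \<le> card (X \<inter> Sh F h)"
  proof (cases "?Z \<inter> Sh F h = {}")
    case False
    then obtain q where q: "q \<in> Y" "q \<notin> X" "\<not> feasible F H M (insert q X)" "q \<in> Sh F h" by blast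
    have fin: "finite X" "finite Y"
      using X Y unfolding feasible_def by (auto intro: rev_finite_subset[OF finite_Sset])
    have "insert q X \<subseteq> Sset F H" using q(1) X Y unfolding feasible_def by auto
    then obtain h' where h': "h' \<in> {1..H}" "card (insert q X \<inter> Sh F h') > M"
      using q(3) unfolding feasible_def by (meson not_le)
    have "q \<in> Sh F h'"
    proof (rule ccontr)
      assume "q \<notin> Sh F h'"
      then have "card (insert q X \<inter> Sh F h') = card (X \<inter> Sh F h')"
        using fin q(2) by (simp add: card_insert_Int_Sh)
      moreover have "card (X \<inter> Sh F h') \<le> M" using X h'(1) unfolding feasible_def by blast
      ultimately show False using h'(2) by linarith
    qed
    then have "h' = h" using q(4) by (simp add: mem_Sh_iff)
    then have "M \<le> card (X \<inter> Sh F h)"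
      using h' q(2,4) fin by (simp add: card_insert_Int_Sh)
    moreover have "card (?Z \<inter> Sh F h) \<le> card (Y \<inter> Sh F h)"
      using fin by (intro card_mono) auto
    moreover have "card (Y \<inter> Sh F h) \<le> M" using Y h unfolding feasible_def by blast
    ultimately show ?thesis by linarith
  qed simp
qed

lemma greedy_output_approx:
  assumes mono: "mono_on (Pow (Sset F H)) G" and sub: "submodular_on (Sset F H) G"
    and out: "greedy_output (Sset F H) (feasible F H M) G X" and Y: "feasible F H M Y"
  shows "G Y + G {} \<le> 2 * G X"
proof -
  have reach: "greedy_reach (Sset F H) (feasible F H M) G X"
    and stop: "greedy_stop (Sset F H) (feasible F H M) G X"
    using out unfolding greedy_output_def by auto
  have X: "feasible F H M X" using greedy_reach_feasible[OF reach] .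
  have XS: "X \<subseteq> Sset F H" and YS: "Y \<subseteq> Sset F H" using X Y unfolding feasible_def by auto
  define Z1 where "Z1 = {q \<in> Y - X. \<not> feasible F H M (insert q X)}"
  define Z2 where "Z2 = {q \<in> Y - X. feasible F H M (insert q X)}"
  have fin: "finite Z1" "finite Z2"
    using YS unfolding Z1_def Z2_def by (auto intro: rev_finite_subset[OF finite_Sset])
  have "Z1 \<subseteq> Sset F H - X" using YS unfolding Z1_def by auto
  then have "(\<Sum>z\<in>Z1. gain G X z) \<le> G X - G {}"
    using greedy_reach_charging[OF mono sub reach] block_dominated_unaddable[OF X Y, folded Z1_def]
    by blast
  moreover have "gain G X z \<le> 0" if "z \<in> Z2" for z
  proof -
    have z: "z \<in> cand (Sset F H) (feasible F H M) X" using that YS unfolding Z2_def cand_def by auto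
    then have "maxgain (Sset F H) (feasible F H M) G X = 0" using stop unfolding greedy_stop_def by auto
    then show ?thesis using gain_le_maxgain[OF finite_Sset z, of G] by simp
  qed
  then have "(\<Sum>z\<in>Z2. gain G X z) \<le> 0" by (rule sum_nonpos)
  moreover have "G Y \<le> G X + (\<Sum>z\<in>Y - X. gain G X z)"
  proof -
    have "G Y \<le> G (X \<union> (Y - X))" using XS YS by (intro mono_onD[OF mono]) auto
    also have "\<dots> \<le> G X + (\<Sum>z\<in>Y - X. gain G X z)"
      by (rule submodular_on_union_le_sum_gain[OF sub XS])
        (use YS in \<open>auto intro: rev_finite_subset[OF finite_Sset]\<close>)
    finally show ?thesis .
  qed
  moreover have "Y - X = Z1 \<union> Z2" "Z1 \<inter> Z2 = {}" unfolding Z1_def Z2_def by auto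
  ultimately show ?thesis using fin by (simp add: sum.union_disjoint)
qed

theorem mainTheorem4:
  fixes H U F M :: nat
    and P :: "nat \<Rightarrow> real"
    and E :: "(nat \<times> nat) set"
    and \<omega> :: "nat \<Rightarrow> nat \<Rightarrow> real"
    and \<omega>inf :: real
    and ord :: "nat \<Rightarrow> nat \<Rightarrow> nat"
  assumes P_nonneg: "\<forall>f\<in>{1..F}. P f \<ge> 0"
    and P_sum: "(\<Sum>f=1..F. P f) = 1"
    and E_sub: "E \<subseteq> {0..H} \<times> {1..U}"
    and E_base: "\<forall>u\<in>{1..U}. (0, u) \<in> E"
    and \<omega>_nonneg: "\<forall>h\<in>{0..H}. \<forall>u\<in>{1..U}. \<omega> h u \<ge> 0"
    and \<omega>_base: "\<forall>(h, u)\<in>E. \<omega> 0 u \<ge> \<omega> h u"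
    and \<omega>_inf: "\<forall>h\<in>{0..H}. \<forall>u\<in>{1..U}. (h, u) \<notin> E \<longrightarrow> \<omega> h u = \<omega>inf"
    and \<omega>_inf_large: "\<forall>u\<in>{1..U}. \<omega>inf > \<omega> 0 u"
    and ord_bij: "\<forall>u\<in>{1..U}. bij_betw (ord u) {1..card (Hs E u)} (Hs E u)"
    and ord_sorted: "\<forall>u\<in>{1..U}. \<forall>i\<in>{1..card (Hs E u)}. \<forall>j\<in>{1..card (Hs E u)}.
                        i \<le> j \<longrightarrow> \<omega> (ord u i) u \<le> \<omega> (ord u j) u"
    and ord_last: "\<forall>u\<in>{1..U}. ord u (card (Hs E u)) = 0"
  shows "(\<exists>X. greedy_output (Sset F H) (feasible F H M) (Gval U E F P \<omega> ord) X)
       \<and> (\<forall>X. greedy_output (Sset F H) (feasible F H M) (Gval U E F P \<omega> ord) X \<longrightarrow>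
            feasible F H M X \<and>
            Gval U E F P \<omega> ord X \<ge> 1/2 * Max (Gval U E F P \<omega> ord ` {Y. feasible F H M Y}))"
proof -
  let ?G = "Gval U E F P \<omega> ord"
  have G_eq: "?G = (\<lambda>X. \<Sum>k\<in>{1..U} \<times> {1..F}. P (snd k) * max_weight (saving E \<omega> (fst k) (snd k)) X)"
    using Gval_eq_sum_max_saving[OF P_sum E_sub E_base ord_bij ord_sorted ord_last]
    by (intro ext) (simp add: sum.cartesian_product split_def)
  have weights: "\<forall>k\<in>{1..U} \<times> {1..F}. P (snd k) \<ge> 0"
    using P_nonneg by (simp add: mem_Times_iff)
  have mono: "mono_on (Pow (Sset F H)) ?G"
    unfolding G_eq by (rule mono_on_sum_max_weight[OF finite_Sset weights])
  have sub: "submodular_on (Sset F H) ?G"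
    unfolding G_eq by (rule submodular_on_sum_max_weight[OF finite_Sset weights])
  have G_empty: "?G {} = 0" unfolding G_eq by simp
  show ?thesis
  proof (intro conjI allI impI)
    show "\<exists>X. greedy_output (Sset F H) (feasible F H M) ?G X"
      by (rule greedy_output_exists[OF finite_Sset])
    fix X assume out: "greedy_output (Sset F H) (feasible F H M) ?G X"
    then show X: "feasible F H M X"
      unfolding greedy_output_def using greedy_reach_feasible by blast
    have "Max (?G ` {Y. feasible F H M Y}) \<le> 2 * ?G X"
      using greedy_output_approx[OF mono sub out] G_empty finite_feasible X
      by (subst Max_le_iff) auto
    then show "1/2 * Max (?G ` {Y. feasible F H M Y}) \<le> ?G X" by simp
  qed
qed

end
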